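(* Let $\mathcal{F}$ be a saturated fusion system over a finite $p$-group $S$, and let $\mathcal{F}_0$ be a weakly normal subsystem of $\mathcal{F}$ over $S_0\le S$. Assume that $O^p(\Aut_{\mathcal{F}}(S_0))\le\Aut_{\mathcal{F}_0}(S_0)$. Then $O^p(\Aut_{\mathcal{F}}(P))\le\Aut_{\mathcal{F}_0}(P)$ for every $P\le S_0$. Thus, if in addition $\mathfrak{hyp}(\mathcal{F})\le S_0$, then $\mathcal{F}_0$ has $p$-power index in $\mathcal{F}$.
   Context: A subsystem $\mathcal{F}_0$ over $S_0$ is weakly normal in $\mathcal{F}$ (in the sense of Aschbacher) if $S_0$ is strongly closed in $\mathcal{F}$, $\mathcal{F}_0$ is saturated, $\mathcal{F}_0$ is $\mathcal{F}$-invariant (for $P\le Q\le S_0$ and $\phi\in\Hom_{\mathcal{F}}(Q,S_0)$, $\phi\Hom_{\mathcal{F}_0}(P,Q)\phi^{-1}\subseteq\Hom_{\mathcal{F}_0}(\phi P,\phi Q)$), and the Frattini condition holds (every $\phi\in\Hom_{\mathcal{F}}(P,S_0)$ with $P\le S_0$ factors as $\alpha\circ\phi_0$ with $\phi_0\in\Hom_{\mathcal{F}_0}(P,S_0)$, $\alpha\in\Aut_{\mathcal{F}}(S_0)$). The hyperfocal subgroup is $\mathfrak{hyp}(\mathcal{F})=\langle \phi(s)s^{-1}\mid s\in P\le S,\ \phi\in O^p(\Aut_{\mathcal{F}}(P))\rangle$. A subsystem $\mathcal{F}_0$ over $S_0\le S$ has $p$-power index in $\mathcal{F}$ if $\mathfrak{hyp}(\mathcal{F})\le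 S_0$ and $O^p(\Aut_{\mathcal{F}}(P))\le\Aut_{\mathcal{F}_0}(P)$ for each $P\le S_0$. *)

theory Defs
  imports "HOL-Algebra.Algebra"
begin

text \<open>
A fusion system over S is given as a function
F :: 'a set => 'a set => ('a => 'a) set, where F P Q is the set Hom_F(P,Q)
of morphisms from P to Q; morphisms are represented as extensional maps
(value undefined outside the domain P), i.e. elements of P ->E Q.
\<close>

definition p_group :: "nat \<Rightarrow> ('a, 'b) monoid_scheme \<Rightarrow> bool" where
  "p_group p S \<longleftrightarrow> Factorial_Ring.prime p \<and> group S \<and> finite (carrier S) \<and>
     (\<exists>n. card (carrier S) = p ^ n)"

definition Inj_hom :: "('a, 'b) monoid_scheme \<Rightarrow> 'a set \<Rightarrow> 'a set \<Rightarrow> ('a \<Rightarrow> 'a) set" where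
  "Inj_hom S P Q = {\<phi>. \<phi> \<in> P \<rightarrow>\<^sub>E Q \<and> inj_on \<phi> P \<and>
      (\<forall>x\<in>P. \<forall>y\<in>P. \<phi> (x \<otimes>\<^bsub>S\<^esub> y) = \<phi> x \<otimes>\<^bsub>S\<^esub> \<phi> y)}"

definition conjmap :: "('a, 'b) monoid_scheme \<Rightarrow> 'a \<Rightarrow> 'a set \<Rightarrow> ('a \<Rightarrow> 'a)" where
  "conjmap S g P = (\<lambda>x\<in>P. g \<otimes>\<^bsub>S\<^esub> x \<otimes>\<^bsub>S\<^esub> inv\<^bsub>S\<^esub> g)"

definition Hom_S :: "('a, 'b) monoid_scheme \<Rightarrow> 'a set \<Rightarrow> 'a set \<Rightarrow> ('a \<Rightarrow> 'a) set" where
  "Hom_S S P Q = {conjmap S g P | g. g \<in> carrier S \<and> conjmap S g P ` P \<subseteq> Q}"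

definition Aut_S :: "('a, 'b) monoid_scheme \<Rightarrow> 'a set \<Rightarrow> ('a \<Rightarrow> 'a) set" where
  "Aut_S S P = {conjmap S g P | g. g \<in> normalizer S P}"

definition centralizer :: "('a, 'b) monoid_scheme \<Rightarrow> 'a set \<Rightarrow> 'a set" where
  "centralizer S P = {g \<in> carrier S. \<forall>x\<in>P. g \<otimes>\<^bsub>S\<^esub> x = x \<otimes>\<^bsub>S\<^esub> g}"

text \<open>Fusion system over the finite p-group S (category with objects the
subgroups of S): Hom_S(P,Q) \<subseteq> Hom_F(P,Q) \<subseteq> Inj(P,Q), closure under
composition, and every morphism is the composite of an F-isomorphism onto
its image (whose inverse is in F) and an inclusion.\<close>
definition fusion_system :: "nat \<Rightarrow> ('a, 'b) monoid_scheme \<Rightarrow> ('a set \<Rightarrow> 'a set \<Rightarrow> ('a \<Rightarrow> 'a) set) \<Rightarrow> bool" where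
  "fusion_system p S F \<longleftrightarrow> p_group p S \<and>
     (\<forall>P Q. F P Q \<noteq> {} \<longrightarrow> subgroup P S \<and> subgroup Q S) \<and>
     (\<forall>P Q. subgroup P S \<and> subgroup Q S \<longrightarrow>
        Hom_S S P Q \<subseteq> F P Q \<and> F P Q \<subseteq> Inj_hom S P Q) \<and>
     (\<forall>P Q R \<phi> \<psi>. \<phi> \<in> F P Q \<and> \<psi> \<in> F Q R \<longrightarrow> compose P \<psi> \<phi> \<in> F P R) \<and>
     (\<forall>P Q \<phi>. \<phi> \<in> F P Q \<longrightarrow> \<phi> \<in> F P (\<phi> ` P) \<and>
        (\<lambda>y\<in>\<phi> ` P. inv_into P \<phi> y) \<in> F (\<phi> ` P) P)"

definition Aut_grp :: "('a set \<Rightarrow> 'a set \<Rightarrow> ('a \<Rightarrow> 'a) set) \<Rightarrow> 'a set \<Rightarrow> ('a \<Rightarrow> 'a) monoid" where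
  "Aut_grp F P = \<lparr>carrier = F P P, monoid.mult = (\<lambda>\<phi> \<psi>. compose P \<phi> \<psi>), monoid.one = (\<lambda>x\<in>P. x)\<rparr>"

definition O_p_upper :: "nat \<Rightarrow> ('c, 'd) monoid_scheme \<Rightarrow> 'c set" where
  "O_p_upper p G = \<Inter> {N. N \<lhd> G \<and> (\<exists>n. card (carrier G) = card N * p ^ n)}"

definition sylow_in :: "nat \<Rightarrow> 'c set \<Rightarrow> 'c set \<Rightarrow> bool" where
  "sylow_in p H K \<longleftrightarrow> H \<subseteq> K \<and> (\<exists>n. card H = p ^ n) \<and> \<not> p dvd (card K div card H)"

definition fully_normalized :: "('a, 'b) monoid_scheme \<Rightarrow> ('a set \<Rightarrow> 'a set \<Rightarrow> ('a \<Rightarrow> 'a) set) \<Rightarrow> 'a set \<Rightarrow> bool" where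
  "fully_normalized S F P \<longleftrightarrow> subgroup P S \<and>
     (\<forall>\<phi>\<in>F P (carrier S). card (normalizer S (\<phi> ` P)) \<le> card (normalizer S P))"

definition fully_centralized :: "('a, 'b) monoid_scheme \<Rightarrow> ('a set \<Rightarrow> 'a set \<Rightarrow> ('a \<Rightarrow> 'a) set) \<Rightarrow> 'a set \<Rightarrow> bool" where
  "fully_centralized S F P \<longleftrightarrow> subgroup P S \<and>
     (\<forall>\<phi>\<in>F P (carrier S). card (centralizer S (\<phi> ` P)) \<le> card (centralizer S P))"

text \<open>N_phi = {g in N_S(P) | phi c_g phi^-1 in Aut_S(phi P)}, written out:
phi o c_g = c_h o phi on P for some h in S.\<close>
definition N_phi :: "('a, 'b) monoid_scheme \<Rightarrow> 'a set \<Rightarrow> ('a \<Rightarrow> 'a) \<Rightarrow> 'a set" where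
  "N_phi S P \<phi> = {g \<in> normalizer S P. \<exists>h \<in> normalizer S (\<phi> ` P).
      \<forall>x\<in>P. \<phi> (g \<otimes>\<^bsub>S\<^esub> x \<otimes>\<^bsub>S\<^esub> inv\<^bsub>S\<^esub> g) = h \<otimes>\<^bsub>S\<^esub> \<phi> x \<otimes>\<^bsub>S\<^esub> inv\<^bsub>S\<^esub> h}"

definition saturated_fusion_system :: "nat \<Rightarrow> ('a, 'b) monoid_scheme \<Rightarrow> ('a set \<Rightarrow> 'a set \<Rightarrow> ('a \<Rightarrow> 'a) set) \<Rightarrow> bool" where
  "saturated_fusion_system p S F \<longleftrightarrow> fusion_system p S F \<and>
     (\<forall>P. fully_normalized S F P \<longrightarrow>
        fully_centralized S F P \<and> sylow_in p (Aut_S S P) (F P P)) \<and>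
     (\<forall>P \<phi>. subgroup P S \<and> \<phi> \<in> F P (carrier S) \<and> fully_centralized S F (\<phi> ` P) \<longrightarrow>
        (\<exists>\<psi> \<in> F (N_phi S P \<phi>) (carrier S). \<forall>x\<in>P. \<psi> x = \<phi> x))"

definition strongly_closed :: "('a, 'b) monoid_scheme \<Rightarrow> ('a set \<Rightarrow> 'a set \<Rightarrow> ('a \<Rightarrow> 'a) set) \<Rightarrow> 'a set \<Rightarrow> bool" where
  "strongly_closed S F S0 \<longleftrightarrow> subgroup S0 S \<and>
     (\<forall>P \<phi>. subgroup P S \<and> P \<subseteq> S0 \<and> \<phi> \<in> F P (carrier S) \<longrightarrow> \<phi> ` P \<subseteq> S0)"

definition subsystem :: "('a, 'b) monoid_scheme \<Rightarrow> ('a set \<Rightarrow> 'a set \<Rightarrow> ('a \<Rightarrow> 'a) set) \<Rightarrow> 'a set \<Rightarrow> ('a set \<Rightarrow> 'a set \<Rightarrow> ('a \<Rightarrow> 'a) set) \<Rightarrow> bool" where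
  "subsystem S F S0 F0 \<longleftrightarrow> subgroup S0 S \<and> (\<forall>P Q. F0 P Q \<subseteq> F P Q)"

definition weakly_normal :: "nat \<Rightarrow> ('a, 'b) monoid_scheme \<Rightarrow> ('a set \<Rightarrow> 'a set \<Rightarrow> ('a \<Rightarrow> 'a) set) \<Rightarrow> 'a set \<Rightarrow> ('a set \<Rightarrow> 'a set \<Rightarrow> ('a \<Rightarrow> 'a) set) \<Rightarrow> bool" where
  "weakly_normal p S F S0 F0 \<longleftrightarrow>
     subsystem S F S0 F0 \<and>
     strongly_closed S F S0 \<and>
     saturated_fusion_system p (S\<lparr>carrier := S0\<rparr>) F0 \<and>
     (\<forall>P Q \<phi> \<psi>. subgroup P S \<and> subgroup Q S \<and> P \<subseteq> Q \<and> Q \<subseteq> S0 \<and>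
        \<phi> \<in> F Q S0 \<and> \<psi> \<in> F0 P Q \<longrightarrow>
        (\<lambda>y\<in>\<phi> ` P. \<phi> (\<psi> (inv_into Q \<phi> y))) \<in> F0 (\<phi> ` P) (\<phi> ` Q)) \<and>
     (\<forall>P \<phi>. subgroup P S \<and> P \<subseteq> S0 \<and> \<phi> \<in> F P S0 \<longrightarrow>
        (\<exists>\<phi>0 \<in> F0 P S0. \<exists>\<alpha> \<in> F S0 S0. \<phi> = compose P \<alpha> \<phi>0))"

definition hyp :: "nat \<Rightarrow> ('a, 'b) monoid_scheme \<Rightarrow> ('a set \<Rightarrow> 'a set \<Rightarrow> ('a \<Rightarrow> 'a) set) \<Rightarrow> 'a set" where
  "hyp p S F = generate S {\<phi> s \<otimes>\<^bsub>S\<^esub> inv\<^bsub>S\<^esub> s | P s \<phi>.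
      subgroup P S \<and> s \<in> P \<and> \<phi> \<in> O_p_upper p (Aut_grp F P)}"

definition p_power_index :: "nat \<Rightarrow> ('a, 'b) monoid_scheme \<Rightarrow> ('a set \<Rightarrow> 'a set \<Rightarrow> ('a \<Rightarrow> 'a) set) \<Rightarrow> 'a set \<Rightarrow> ('a set \<Rightarrow> 'a set \<Rightarrow> ('a \<Rightarrow> 'a) set) \<Rightarrow> bool" where
  "p_power_index p S F S0 F0 \<longleftrightarrow> hyp p S F \<subseteq> S0 \<and>
     (\<forall>P. subgroup P S \<and> P \<subseteq> S0 \<longrightarrow> O_p_upper p (Aut_grp F P) \<subseteq> F0 P P)"

end

theory Submission
  imports Defs
begin

text \<open>
  Fix \<open>P \<le> S0\<close>. The automorphisms \<open>\<alpha>\<close> of \<open>S0\<close> in \<open>F\<close> that map \<open>P\<close> to an \<open>F0\<close>-conjugate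
  of \<open>P\<close> form a subgroup \<open>Y\<close> of \<open>Aut_F(S0)\<close>, and \<open>\<alpha> \<mapsto> Aut_F0(P) (\<theta> \<circ> \<alpha>|P)\<close>, for any
  \<open>\<theta> \<in> Hom_F0(\<alpha>P, P)\<close>, is a well-defined homomorphism from \<open>Y\<close> onto \<open>Aut_F(P)/Aut_F0(P)\<close>:
  it is multiplicative by \<open>F\<close>-invariance of \<open>F0\<close> and surjective by the Frattini condition.
  Its kernel contains \<open>Aut_F0(S0)\<close>, hence \<open>O^p(Aut_F(S0))\<close>, which has \<open>p\<close>-power index in
  \<open>Aut_F(S0)\<close>. So \<open>Aut_F0(P)\<close>, which is normal in \<open>Aut_F(P)\<close> by invariance, has \<open>p\<close>-power
  index, and therefore contains \<open>O^p(Aut_F(P))\<close>.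
\<close>

section \<open>Subgroups of \<open>p\<close>-power index\<close>

lemma (in group_hom) card_eq_card_kernel_mult_card_image:
  assumes "finite (carrier G)"
  shows "card (carrier G) = card (kernel G H h) * card (h ` carrier G)"
proof -
  let ?I = "H\<lparr>carrier := h ` carrier G\<rparr>"
  have "group ?I" using H.subgroup_imp_group[OF img_is_subgroup] .
  then interpret img: group_hom G ?I h
    by (simp add: group_hom_def group_hom_axioms_def hom_def G.group_axioms)
  have "kernel G ?I h = kernel G H h" by (simp add: kernel_def)
  then have "G Mod kernel G H h \<cong> ?I" using img.FactGroup_iso by simp
  then have "card (rcosets kernel G H h) = card (h ` carrier G)"
    using iso_same_card by (fastforce simp: FactGroup_def)
  then show ?thesis
    using G.lagrange[OF subgroup_kernel] by (simp add: order_def mult.commute)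
qed

lemma (in group_hom) group_hom_subgroup:
  assumes "subgroup K G"
  shows "group_hom (G\<lparr>carrier := K\<rparr>) H h"
  using G.subgroup_imp_group[OF assms] subgroup.subset[OF assms]
  by (auto simp: group_hom_def group_hom_axioms_def hom_def subsetD)

lemma (in normal) p_power_index_Int:
  assumes "finite (carrier G)" "Factorial_Ring.prime (p::nat)" "subgroup M G"
    and "card (carrier G) = card H * p ^ n"
  shows "\<exists>c. card M = card (M \<inter> H) * p ^ c"
proof -
  interpret q: group_hom G "G Mod H" "\<lambda>x. H #> x"
    using factorgroup_is_group r_coset_hom_Mod by (simp add: group_hom_def group_hom_axioms_def)
  interpret qM: group_hom "G\<lparr>carrier := M\<rparr>" "G Mod H" "\<lambda>x. H #> x"
    by (rule q.group_hom_subgroup) fact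
  have M: "M \<subseteq> carrier G" "finite M"
    using subgroup.subset[OF assms(3)] assms(1) finite_subset by blast+
  have "kernel (G\<lparr>carrier := M\<rparr>) (G Mod H) (\<lambda>x. H #> x) = M \<inter> H"
    using M(1) rcos_self subgroup_axioms by (auto simp: kernel_def FactGroup_def rcos_const)
  then have card_M: "card M = card (M \<inter> H) * card ((\<lambda>x. H #> x) ` M)"
    using qM.card_eq_card_kernel_mult_card_image M(2) by simp
  have "card H > 0"
    using finite_subset[OF subset assms(1)] subgroup.one_closed[OF is_subgroup] card_gt_0_iff
    by blast
  then have "card (carrier (G Mod H)) = p ^ n"
    using lagrange[OF subgroup_axioms] assms(4) by (simp add: FactGroup_def order_def)
  moreover have "card ((\<lambda>x. H #> x) ` M) dvd card (carrier (G Mod H))"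
    using group.lagrange[OF factorgroup_is_group qM.img_is_subgroup]
    unfolding order_def by (simp add: dvd_def) (metis mult.commute)
  ultimately show ?thesis
    using card_M divides_primepow_nat[OF assms(2)] by metis
qed

lemma (in group) normal_Int_p_power_index:
  assumes "finite (carrier G)" "Factorial_Ring.prime (p::nat)" "M \<lhd> G" "N \<lhd> G"
    and "card (carrier G) = card M * p ^ a" "card (carrier G) = card N * p ^ b"
  shows "\<exists>c. card (carrier G) = card (M \<inter> N) * p ^ c"
proof -
  obtain c where "card M = card (M \<inter> N) * p ^ c"
    using normal.p_power_index_Int[OF assms(4,1,2) normal_imp_subgroup[OF assms(3)] assms(6)] by blast
  then have "card (carrier G) = card (M \<inter> N) * p ^ (c + a)"
    using assms(5) by (simp add: power_add)
  then show ?thesis ..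
qed

lemma O_p_upper_normal_p_power_index:
  assumes "group G" "finite (carrier G)" "Factorial_Ring.prime (p::nat)"
  shows "O_p_upper p G \<lhd> G" "\<exists>n. card (carrier G) = card (O_p_upper p G) * p ^ n"
proof -
  interpret G: group G by fact
  define \<N> where "\<N> = {N. N \<lhd> G \<and> (\<exists>n. card (carrier G) = card N * p ^ n)}"
  have "finite \<N>"
    using assms(2) by (auto simp: \<N>_def dest: normal_imp_subgroup subgroup.subset
        intro: finite_subset[of _ "Pow (carrier G)"])
  moreover have "carrier G \<in> \<N>"
    using G.normal_invI G.subgroup_self by (auto simp: \<N>_def intro!: exI[of _ 0])
  moreover have Int: "M \<inter> N \<in> \<N>" if "M \<in> \<N>" "N \<in> \<N>" for M N
    using that G.normal_subgroup_intersect G.normal_Int_p_power_index[OF assms(2,3)]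
    unfolding \<N>_def by blast
  have "\<Inter>\<A> \<in> \<N>" if "finite \<A>" "\<A> \<noteq> {}" "\<A> \<subseteq> \<N>" for \<A>
    using that by (induction \<A> rule: finite_ne_induct) (auto intro: Int)
  ultimately have "\<Inter>\<N> \<in> \<N>" by blast
  then show "O_p_upper p G \<lhd> G" "\<exists>n. card (carrier G) = card (O_p_upper p G) * p ^ n"
    unfolding O_p_upper_def \<N>_def[symmetric] by (auto simp: \<N>_def)
qed

lemma (in group) card_hom_image_p_power:
  assumes "finite (carrier G)" "Factorial_Ring.prime (p::nat)"
    and "subgroup Y G" "group_hom (G\<lparr>carrier := Y\<rparr>) K h"
    and "subgroup N G" "N \<subseteq> kernel (G\<lparr>carrier := Y\<rparr>) K h"
    and "card (carrier G) = card N * p ^ n"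
  shows "\<exists>c. card (h ` Y) = p ^ c"
proof -
  interpret h: group_hom "G\<lparr>carrier := Y\<rparr>" K h by fact
  let ?ker = "kernel (G\<lparr>carrier := Y\<rparr>) K h"
  have ker: "subgroup ?ker G"
    using incl_subgroup[OF assms(3) h.subgroup_kernel] .
  have "card Y dvd card (rcosets Y) * card Y" by (rule dvd_triv_right)
  also have "\<dots> = card N * p ^ n"
    using lagrange[OF assms(3)] assms(7) by (simp add: order_def)
  finally have Y_dvd: "card Y dvd card N * p ^ n" .
  have "card N dvd card (rcosets\<^bsub>G\<lparr>carrier := ?ker\<rparr>\<^esub> N) * card N" by (rule dvd_triv_right)
  also have "\<dots> = card ?ker"
    using group.lagrange[OF subgroup_imp_group[OF ker] subgroup_incl[OF assms(5) ker assms(6)]]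
    by (simp add: order_def)
  finally have "card N * card (h ` Y) dvd card ?ker * card (h ` Y)" by (rule mult_dvd_mono) simp
  also have "\<dots> = card Y"
    using h.card_eq_card_kernel_mult_card_image finite_subset[OF subgroup.subset assms(1)] assms(3)
    by simp
  finally have "card N * card (h ` Y) dvd card N * p ^ n" using Y_dvd by (rule dvd_trans)
  moreover have "card N > 0"
    using finite_subset[OF subgroup.subset[OF assms(5)] assms(1)] subgroup.one_closed[OF assms(5)]
    by (auto simp: card_gt_0_iff)
  ultimately have "card (h ` Y) dvd p ^ n" by simp
  then show ?thesis using divides_primepow_nat[OF assms(2)] by blast
qed

section \<open>Fusion systems\<close>

lemma fusion_system_group:
  assumes "fusion_system p S F"
  shows "group S" "finite (carrier S)" "Factorial_Ring.prime p"
  using assms unfolding fusion_system_def p_group_def by auto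

lemma fusion_hom_subgroups:
  assumes "fusion_system p S F" "\<phi> \<in> F P Q"
  shows "subgroup P S" "subgroup Q S"
  using assms unfolding fusion_system_def by blast+

lemma fusion_hom_Inj_hom:
  assumes "fusion_system p S F" "\<phi> \<in> F P Q"
  shows "\<phi> \<in> P \<rightarrow>\<^sub>E Q" "inj_on \<phi> P"
proof -
  have "\<phi> \<in> Inj_hom S P Q"
    using assms fusion_hom_subgroups[OF assms] unfolding fusion_system_def by blast
  then show "\<phi> \<in> P \<rightarrow>\<^sub>E Q" "inj_on \<phi> P" unfolding Inj_hom_def by auto
qed

lemma fusion_hom_compose:
  assumes "fusion_system p S F" "\<phi> \<in> F P Q" "\<psi> \<in> F Q R"
  shows "compose P \<psi> \<phi> \<in> F P R"
  using assms unfolding fusion_system_def by blast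

lemma fusion_hom_onto_image:
  assumes "fusion_system p S F" "\<phi> \<in> F P Q"
  shows "\<phi> \<in> F P (\<phi> ` P)" "(\<lambda>y\<in>\<phi> ` P. inv_into P \<phi> y) \<in> F (\<phi> ` P) P"
  using assms unfolding fusion_system_def by blast+

lemma fusion_hom_inclusion:
  assumes "fusion_system p S F" "subgroup P S" "subgroup Q S" "P \<subseteq> Q"
  shows "(\<lambda>x\<in>P. x) \<in> F P Q"
proof -
  interpret S: group S using fusion_system_group[OF assms(1)] by simp
  have "conjmap S \<one>\<^bsub>S\<^esub> P = (\<lambda>x\<in>P. x)"
    unfolding conjmap_def using subgroup.subset[OF assms(2)] by (intro restrict_ext) auto
  then have "(\<lambda>x\<in>P. x) \<in> Hom_S S P Q"
    unfolding Hom_S_def using assms(4) by force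
  then show ?thesis using assms unfolding fusion_system_def by blast
qed

lemma fusion_hom_widen:
  assumes "fusion_system p S F" "\<phi> \<in> F P Q" "subgroup R S" "Q \<subseteq> R"
  shows "\<phi> \<in> F P R"
proof -
  have "compose P (\<lambda>x\<in>Q. x) \<phi> \<in> F P R"
    using fusion_hom_compose[OF assms(1,2)] fusion_hom_inclusion[OF assms(1)]
      fusion_hom_subgroups(2)[OF assms(1,2)] assms(3,4) by blast
  moreover have "compose P (\<lambda>x\<in>Q. x) \<phi> = \<phi>"
    using fusion_hom_Inj_hom(1)[OF assms(1,2)] by (intro Id_compose) (auto simp: PiE_def)
  ultimately show ?thesis by simp
qed

lemma fusion_hom_restrict_image:
  assumes "fusion_system p S F" "\<phi> \<in> F Q R" "subgroup P S" "P \<subseteq> Q"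
  shows "restrict \<phi> P \<in> F P (\<phi> ` P)"
proof -
  have "compose P \<phi> (\<lambda>x\<in>P. x) \<in> F P R"
    using fusion_hom_compose[OF assms(1) _ assms(2)] fusion_hom_inclusion[OF assms(1,3)]
      fusion_hom_subgroups(1)[OF assms(1,2)] assms(4) by blast
  moreover have "compose P \<phi> (\<lambda>x\<in>P. x) = restrict \<phi> P"
    by (auto simp: compose_def fun_eq_iff)
  ultimately show ?thesis
    using fusion_hom_onto_image(1)[OF assms(1)] by (metis image_restrict_eq)
qed

lemma fusion_hom_image_eq:
  assumes "fusion_system p S F" "\<phi> \<in> F P Q" "card Q = card P"
  shows "\<phi> ` P = Q"
proof (rule card_subset_eq)
  show "finite Q"
    using fusion_system_group(2)[OF assms(1)] fusion_hom_subgroups(2)[OF assms(1,2)]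
      subgroup.subset finite_subset by blast
  show "\<phi> ` P \<subseteq> Q" using fusion_hom_Inj_hom(1)[OF assms(1,2)] by auto
  show "card (\<phi> ` P) = card Q"
    using fusion_hom_Inj_hom(2)[OF assms(1,2)] assms(3) by (simp add: card_image)
qed

lemma fusion_hom_inverse:
  assumes "fusion_system p S F" "\<phi> \<in> F P Q" "card Q = card P"
  shows "(\<lambda>y\<in>Q. inv_into P \<phi> y) \<in> F Q P"
  using fusion_hom_onto_image(2)[OF assms(1,2)] fusion_hom_image_eq[OF assms] by simp

lemma fusion_aut_inverse:
  assumes "fusion_system p S F" "\<phi> \<in> F P P"
  shows "(\<lambda>y\<in>P. inv_into P \<phi> y) \<in> F P P"
    "compose P (\<lambda>y\<in>P. inv_into P \<phi> y) \<phi> = (\<lambda>x\<in>P. x)"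
  using fusion_hom_inverse[OF assms] fusion_hom_Inj_hom(2)[OF assms]
    fusion_hom_image_eq[OF assms] compose_inv_into_id[of \<phi> P P]
  by (auto simp: bij_betw_def)

lemma group_Aut_grp:
  assumes "fusion_system p S F" "subgroup P S"
  shows "group (Aut_grp F P)"
proof (rule groupI)
  fix x y z
  assume x: "x \<in> carrier (Aut_grp F P)" and "y \<in> carrier (Aut_grp F P)"
    and z: "z \<in> carrier (Aut_grp F P)"
  then show "x \<otimes>\<^bsub>Aut_grp F P\<^esub> y \<in> carrier (Aut_grp F P)"
    using fusion_hom_compose[OF assms(1)] by (simp add: Aut_grp_def)
  have "z \<in> P \<rightarrow> P" using fusion_hom_Inj_hom(1)[OF assms(1)] z by (auto simp: Aut_grp_def)
  then show "x \<otimes>\<^bsub>Aut_grp F P\<^esub> y \<otimes>\<^bsub>Aut_grp F P\<^esub> z = x \<otimes>\<^bsub>Aut_grp F P\<^esub> (y \<otimes>\<^bsub>Aut_grp F P\<^esub> z)"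
    by (simp add: Aut_grp_def compose_assoc)
  show "\<one>\<^bsub>Aut_grp F P\<^esub> \<otimes>\<^bsub>Aut_grp F P\<^esub> x = x"
    using fusion_hom_Inj_hom(1)[OF assms(1)] x by (auto simp: Aut_grp_def PiE_def intro!: Id_compose)
  show "\<exists>y\<in>carrier (Aut_grp F P). y \<otimes>\<^bsub>Aut_grp F P\<^esub> x = \<one>\<^bsub>Aut_grp F P\<^esub>"
    using fusion_aut_inverse[OF assms(1)] x by (simp add: Aut_grp_def) blast
next
  show "\<one>\<^bsub>Aut_grp F P\<^esub> \<in> carrier (Aut_grp F P)"
    using fusion_hom_inclusion[OF assms assms(2)] by (simp add: Aut_grp_def)
qed

lemma Aut_grp_inv:
  assumes "fusion_system p S F" "subgroup P S" "\<phi> \<in> F P P"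
  shows "inv\<^bsub>Aut_grp F P\<^esub> \<phi> = (\<lambda>y\<in>P. inv_into P \<phi> y)"
  using group.inv_equality[OF group_Aut_grp[OF assms(1,2)]] fusion_aut_inverse[OF assms(1,3)] assms(3)
  by (simp add: Aut_grp_def)

lemma finite_Aut_grp:
  assumes "fusion_system p S F" "subgroup P S"
  shows "finite (carrier (Aut_grp F P))"
proof (rule finite_subset)
  show "carrier (Aut_grp F P) \<subseteq> P \<rightarrow>\<^sub>E P"
    using fusion_hom_Inj_hom(1)[OF assms(1)] by (auto simp: Aut_grp_def)
  show "finite (P \<rightarrow>\<^sub>E P)"
    using fusion_system_group(2)[OF assms(1)] subgroup.subset[OF assms(2)]
    by (intro finite_PiE) (auto intro: finite_subset)
qed

section \<open>Invariant subsystems satisfying the Frattini condition\<close>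

locale invariant_Frattini_subsystem =
  fixes p :: nat and S :: "('a, 'b) monoid_scheme"
    and F :: "'a set \<Rightarrow> 'a set \<Rightarrow> ('a \<Rightarrow> 'a) set" and S0 :: "'a set"
    and F0 :: "'a set \<Rightarrow> 'a set \<Rightarrow> ('a \<Rightarrow> 'a) set"
  assumes fusion: "fusion_system p S F"
    and sub_fusion: "fusion_system p (S\<lparr>carrier := S0\<rparr>) F0"
    and subgroup_S0: "subgroup S0 S"
    and sub_hom: "F0 P Q \<subseteq> F P Q"
    and invariant: "\<lbrakk>subgroup P S; subgroup Q S; P \<subseteq> Q; Q \<subseteq> S0; \<phi> \<in> F Q S0; \<psi> \<in> F0 P Q\<rbrakk>
        \<Longrightarrow> (\<lambda>y\<in>\<phi> ` P. \<phi> (\<psi> (inv_into Q \<phi> y))) \<in> F0 (\<phi> ` P) (\<phi> ` Q)"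
    and Frattini: "\<lbrakk>subgroup P S; P \<subseteq> S0; \<phi> \<in> F P S0\<rbrakk>
        \<Longrightarrow> \<exists>\<phi>0\<in>F0 P S0. \<exists>\<alpha>\<in>F S0 S0. \<phi> = compose P \<alpha> \<phi>0"

lemma weakly_normal_invariant_Frattini_subsystem:
  assumes "fusion_system p S F" "weakly_normal p S F S0 F0"
  shows "invariant_Frattini_subsystem p S F S0 F0"
  using assms
  unfolding invariant_Frattini_subsystem_def weakly_normal_def subsystem_def
    saturated_fusion_system_def
  by blast

context invariant_Frattini_subsystem
begin

lemma subgroup_S0_iff: "subgroup U (S\<lparr>carrier := S0\<rparr>) \<longleftrightarrow> subgroup U S \<and> U \<subseteq> S0"
  using group.incl_subgroup[OF fusion_system_group(1)[OF fusion] subgroup_S0]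
    group.subgroup_incl[OF fusion_system_group(1)[OF fusion] _ subgroup_S0]
    subgroup.subset by fastforce

lemma sub_hom_subgroups:
  assumes "\<psi> \<in> F0 U Z"
  shows "subgroup U S" "U \<subseteq> S0" "subgroup Z S" "Z \<subseteq> S0"
  using fusion_hom_subgroups[OF sub_fusion assms] subgroup_S0_iff by auto

lemma Aut_S0_image:
  assumes "\<alpha> \<in> F S0 S0" "subgroup U S" "U \<subseteq> S0"
  shows "subgroup (\<alpha> ` U) S" "\<alpha> ` U \<subseteq> S0" "card (\<alpha> ` U) = card U"
proof -
  show "subgroup (\<alpha> ` U) S"
    using fusion_hom_subgroups(2)[OF fusion fusion_hom_restrict_image[OF fusion assms]] by simp
  show "\<alpha> ` U \<subseteq> S0" using fusion_hom_Inj_hom(1)[OF fusion assms(1)] assms(3) by auto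
  show "card (\<alpha> ` U) = card U"
    using fusion_hom_Inj_hom(2)[OF fusion assms(1)] assms(3) by (meson card_image inj_on_subset)
qed

lemma Aut_S0_inverse:
  assumes "\<alpha> \<in> F S0 S0"
  shows "(\<lambda>y\<in>S0. inv_into S0 \<alpha> y) \<in> F S0 S0" "\<alpha> ` S0 = S0"
  using fusion_aut_inverse(1)[OF fusion assms] fusion_hom_image_eq[OF fusion assms] by simp_all

lemma sub_hom_conj:
  assumes "\<alpha> \<in> F S0 S0" "\<psi> \<in> F0 U Z"
  shows "(\<lambda>y\<in>\<alpha> ` U. \<alpha> (\<psi> (inv_into S0 \<alpha> y))) \<in> F0 (\<alpha> ` U) (\<alpha> ` Z)"
proof -
  note U = sub_hom_subgroups[OF assms(2)]
  let ?t = "\<lambda>y\<in>\<alpha> ` U. \<alpha> (\<psi> (inv_into S0 \<alpha> y))"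
  have "\<psi> \<in> F0 U S0"
    using fusion_hom_widen[OF sub_fusion assms(2)] subgroup_S0_iff subgroup_S0 U(4) by blast
  then have "?t \<in> F0 (\<alpha> ` U) (?t ` \<alpha> ` U)"
    using invariant[OF U(1) subgroup_S0 U(2) order_refl assms(1)] fusion_hom_onto_image(1)[OF sub_fusion]
    by blast
  moreover have "?t ` \<alpha> ` U \<subseteq> \<alpha> ` Z"
    using inv_into_f_f[OF fusion_hom_Inj_hom(2)[OF fusion assms(1)]] U(2)
      fusion_hom_Inj_hom(1)[OF sub_fusion assms(2)] by (fastforce simp: subset_iff)
  moreover have "subgroup (\<alpha> ` Z) (S\<lparr>carrier := S0\<rparr>)"
    using Aut_S0_image[OF assms(1) U(3,4)] subgroup_S0_iff by simp
  ultimately show ?thesis using fusion_hom_widen[OF sub_fusion] by blast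
qed

lemma normal_sub_Aut_grp:
  assumes "subgroup P S" "P \<subseteq> S0"
  shows "F0 P P \<lhd> Aut_grp F P"
proof -
  interpret G: group "Aut_grp F P" using group_Aut_grp[OF fusion assms(1)] .
  have P: "subgroup P (S\<lparr>carrier := S0\<rparr>)" using assms subgroup_S0_iff by simp
  have "subgroup (F0 P P) (Aut_grp F P)"
  proof (rule G.subgroupI)
    show "F0 P P \<subseteq> carrier (Aut_grp F P)" using sub_hom by (simp add: Aut_grp_def)
    show "F0 P P \<noteq> {}" using fusion_hom_inclusion[OF sub_fusion P P] by auto
    show "inv\<^bsub>Aut_grp F P\<^esub> a \<in> F0 P P" if "a \<in> F0 P P" for a
      using Aut_grp_inv[OF fusion assms(1) subsetD[OF sub_hom that]]
        fusion_aut_inverse(1)[OF sub_fusion that] by simp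
    show "a \<otimes>\<^bsub>Aut_grp F P\<^esub> b \<in> F0 P P" if "a \<in> F0 P P" "b \<in> F0 P P" for a b
      using fusion_hom_compose[OF sub_fusion that(2,1)] by (simp add: Aut_grp_def)
  qed
  moreover have "x \<otimes>\<^bsub>Aut_grp F P\<^esub> h \<otimes>\<^bsub>Aut_grp F P\<^esub> inv\<^bsub>Aut_grp F P\<^esub> x \<in> F0 P P"
    if x: "x \<in> F P P" and h: "h \<in> F0 P P" for x h
  proof -
    have "x ` P = P" using fusion_hom_image_eq[OF fusion x] by simp
    moreover have "x \<in> F P S0" using fusion_hom_widen[OF fusion x subgroup_S0 assms(2)] .
    ultimately have "(\<lambda>y\<in>P. x (h (inv_into P x y))) \<in> F0 P P"
      using invariant[OF assms(1) assms(1) order_refl assms(2) _ h, of x] by simp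
    moreover have "x \<otimes>\<^bsub>Aut_grp F P\<^esub> h \<otimes>\<^bsub>Aut_grp F P\<^esub> inv\<^bsub>Aut_grp F P\<^esub> x
        = (\<lambda>y\<in>P. x (h (inv_into P x y)))"
      using Aut_grp_inv[OF fusion assms(1) x] \<open>x ` P = P\<close>
      by (auto simp: Aut_grp_def compose_def fun_eq_iff inv_into_into)
    ultimately show ?thesis by simp
  qed
  ultimately show ?thesis
    unfolding G.normal_inv_iff by (simp add: Aut_grp_def)
qed

text \<open>\<open>class_stabilizer P\<close> is the stabilizer in \<open>Aut_F(S0)\<close> of the \<open>F0\<close>-conjugacy class
  of \<open>P\<close>, and \<open>class_coset P \<alpha>\<close> the set of all \<open>\<theta> \<circ> \<alpha>|P\<close> with \<open>\<theta> \<in> Hom_F0(\<alpha>P, P)\<close>: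
  a coset of \<open>Aut_F0(P)\<close> in \<open>Aut_F(P)\<close>.\<close>
definition class_stabilizer :: "'a set \<Rightarrow> ('a \<Rightarrow> 'a) set" where
  "class_stabilizer P = {\<alpha> \<in> F S0 S0. F0 (\<alpha> ` P) P \<noteq> {}}"

definition class_coset :: "'a set \<Rightarrow> ('a \<Rightarrow> 'a) \<Rightarrow> ('a \<Rightarrow> 'a) set" where
  "class_coset P \<alpha> = (\<lambda>\<theta>. compose P \<theta> \<alpha>) ` F0 (\<alpha> ` P) P"

lemma class_coset_eq_r_coset:
  assumes P: "subgroup P S" "P \<subseteq> S0" and \<alpha>: "\<alpha> \<in> F S0 S0" and \<theta>: "\<theta> \<in> F0 (\<alpha> ` P) P"
  shows "compose P \<theta> \<alpha> \<in> F P P"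
    and "class_coset P \<alpha> = F0 P P #>\<^bsub>Aut_grp F P\<^esub> compose P \<theta> \<alpha>"
proof -
  have "compose P \<theta> (restrict \<alpha> P) \<in> F P P"
    using fusion_hom_compose[OF fusion fusion_hom_restrict_image[OF fusion \<alpha> P]] \<theta> sub_hom by blast
  moreover have "compose P \<theta> (restrict \<alpha> P) = compose P \<theta> \<alpha>"
    by (auto simp: compose_def fun_eq_iff)
  ultimately show "compose P \<theta> \<alpha> \<in> F P P" by simp
  have inj_\<theta>: "inj_on \<theta> (\<alpha> ` P)" using fusion_hom_Inj_hom(2)[OF sub_fusion \<theta>] .
  let ?\<theta>' = "\<lambda>y\<in>P. inv_into (\<alpha> ` P) \<theta> y"
  have \<theta>': "?\<theta>' \<in> F0 P (\<alpha> ` P)"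
    using fusion_hom_inverse[OF sub_fusion \<theta>] Aut_S0_image(3)[OF \<alpha> P] by simp
  have "class_coset P \<alpha> = {compose P h (compose P \<theta> \<alpha>) | h. h \<in> F0 P P}"
  proof (intro equalityI subsetI)
    fix c assume "c \<in> class_coset P \<alpha>"
    then obtain \<eta> where \<eta>: "\<eta> \<in> F0 (\<alpha> ` P) P" and c: "c = compose P \<eta> \<alpha>"
      unfolding class_coset_def by blast
    have "compose P \<eta> \<alpha> = compose P (compose P \<eta> ?\<theta>') (compose P \<theta> \<alpha>)"
      using inv_into_f_f[OF inj_\<theta>] fusion_hom_Inj_hom(1)[OF sub_fusion \<theta>]
      by (auto simp: compose_def fun_eq_iff)
    moreover have "compose P \<eta> ?\<theta>' \<in> F0 P P" using fusion_hom_compose[OF sub_fusion \<theta>' \<eta>] .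
    ultimately show "c \<in> {compose P h (compose P \<theta> \<alpha>) | h. h \<in> F0 P P}" using c by blast
  next
    fix c assume "c \<in> {compose P h (compose P \<theta> \<alpha>) | h. h \<in> F0 P P}"
    then obtain h where h: "h \<in> F0 P P" and c: "c = compose P h (compose P \<theta> \<alpha>)" by blast
    have "c = compose P (compose (\<alpha> ` P) h \<theta>) \<alpha>"
      using c by (auto simp: compose_def fun_eq_iff)
    moreover have "compose (\<alpha> ` P) h \<theta> \<in> F0 (\<alpha> ` P) P"
      using fusion_hom_compose[OF sub_fusion \<theta> h] .
    ultimately show "c \<in> class_coset P \<alpha>" unfolding class_coset_def by blast
  qed
  then show "class_coset P \<alpha> = F0 P P #>\<^bsub>Aut_grp F P\<^esub> compose P \<theta> \<alpha>"
    by (auto simp: r_coset_def Aut_grp_def)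
qed

lemma class_coset_compose:
  assumes P: "P \<subseteq> S0" and \<alpha>: "\<alpha> \<in> F S0 S0" "\<theta> \<in> F0 (\<alpha> ` P) P"
    and \<beta>: "\<beta> \<in> F S0 S0" "\<eta> \<in> F0 (\<beta> ` P) P"
  shows "\<exists>\<zeta> \<in> F0 (compose S0 \<alpha> \<beta> ` P) P.
    compose P (compose P \<theta> \<alpha>) (compose P \<eta> \<beta>) = compose P \<zeta> (compose S0 \<alpha> \<beta>)"
proof
  let ?\<psi> = "\<lambda>y\<in>\<alpha> ` \<beta> ` P. \<alpha> (\<eta> (inv_into S0 \<alpha> y))"
  let ?\<zeta> = "compose (\<alpha> ` \<beta> ` P) \<theta> ?\<psi>"
  have "compose S0 \<alpha> \<beta> ` P = \<alpha> ` \<beta> ` P" using P by (auto simp: compose_def image_iff)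
  then show "?\<zeta> \<in> F0 (compose S0 \<alpha> \<beta> ` P) P"
    using fusion_hom_compose[OF sub_fusion sub_hom_conj[OF \<alpha>(1) \<beta>(2)] \<alpha>(2)] by simp
  have "\<beta> x \<in> S0" "\<eta> (\<beta> x) \<in> P" if "x \<in> P" for x
    using that P fusion_hom_Inj_hom(1)[OF fusion \<beta>(1)] fusion_hom_Inj_hom(1)[OF sub_fusion \<beta>(2)]
    by auto
  then show "compose P (compose P \<theta> \<alpha>) (compose P \<eta> \<beta>) = compose P ?\<zeta> (compose S0 \<alpha> \<beta>)"
    using P inv_into_f_f[OF fusion_hom_Inj_hom(2)[OF fusion \<alpha>(1)]]
    by (auto simp: compose_def fun_eq_iff)
qed

lemma F0_Aut_S0_class_coset:
  assumes P: "subgroup P S" "P \<subseteq> S0" and \<alpha>: "\<alpha> \<in> F0 S0 S0"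
  shows "\<alpha> \<in> class_stabilizer P" "class_coset P \<alpha> = F0 P P"
proof -
  have "subgroup P (S\<lparr>carrier := S0\<rparr>)" using P subgroup_S0_iff by simp
  then have "restrict \<alpha> P \<in> F0 P (\<alpha> ` P)"
    using fusion_hom_restrict_image[OF sub_fusion \<alpha> _ P(2)] by simp
  then have "(\<lambda>y\<in>\<alpha> ` P. inv_into P (restrict \<alpha> P) y) \<in> F0 (\<alpha> ` P) P"
    using fusion_hom_onto_image(2)[OF sub_fusion] by fastforce
  moreover have "inv_into P (restrict \<alpha> P) = inv_into P \<alpha>"
    unfolding inv_into_def by (intro ext arg_cong[where f = Eps]) auto
  ultimately have \<theta>: "(\<lambda>y\<in>\<alpha> ` P. inv_into P \<alpha> y) \<in> F0 (\<alpha> ` P) P" by simp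
  have \<alpha>F: "\<alpha> \<in> F S0 S0" using \<alpha> sub_hom by blast
  then show "\<alpha> \<in> class_stabilizer P" using \<theta> unfolding class_stabilizer_def by blast
  have "compose P (\<lambda>y\<in>\<alpha> ` P. inv_into P \<alpha> y) \<alpha> = \<one>\<^bsub>Aut_grp F P\<^esub>"
    using inv_into_f_f[OF inj_on_subset[OF fusion_hom_Inj_hom(2)[OF fusion \<alpha>F] P(2)]]
    by (auto simp: compose_def fun_eq_iff Aut_grp_def)
  moreover have "F0 P P \<subseteq> carrier (Aut_grp F P)" using sub_hom by (simp add: Aut_grp_def)
  ultimately show "class_coset P \<alpha> = F0 P P"
    using class_coset_eq_r_coset(2)[OF P \<alpha>F \<theta>] group.coset_mult_one[OF group_Aut_grp[OF fusion P(1)]]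
    by simp
qed

lemma class_stabilizer_inverse:
  assumes P: "subgroup P S" "P \<subseteq> S0" and \<alpha>: "\<alpha> \<in> class_stabilizer P"
  shows "(\<lambda>y\<in>S0. inv_into S0 \<alpha> y) \<in> class_stabilizer P"
proof -
  obtain \<theta> where \<alpha>F: "\<alpha> \<in> F S0 S0" and \<theta>: "\<theta> \<in> F0 (\<alpha> ` P) P"
    using \<alpha> unfolding class_stabilizer_def by blast
  let ?\<beta> = "\<lambda>y\<in>S0. inv_into S0 \<alpha> y"
  have \<beta>: "?\<beta> \<in> F S0 S0" using Aut_S0_inverse(1)[OF \<alpha>F] .
  have "(\<lambda>y\<in>P. inv_into (\<alpha> ` P) \<theta> y) \<in> F0 P (\<alpha> ` P)"
    using fusion_hom_inverse[OF sub_fusion \<theta>] Aut_S0_image(3)[OF \<alpha>F P] by simp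
  then have "F0 (?\<beta> ` P) (?\<beta> ` \<alpha> ` P) \<noteq> {}" using sub_hom_conj[OF \<beta>] by blast
  moreover have "?\<beta> ` \<alpha> ` P = inv_into S0 \<alpha> ` \<alpha> ` P"
    using Aut_S0_image(2)[OF \<alpha>F P] by (intro image_cong) auto
  moreover have "\<dots> = P"
    using fusion_hom_Inj_hom(2)[OF fusion \<alpha>F] P(2) by simp
  ultimately show ?thesis using \<beta> unfolding class_stabilizer_def by auto
qed

lemma subgroup_class_stabilizer:
  assumes P: "subgroup P S" "P \<subseteq> S0"
  shows "subgroup (class_stabilizer P) (Aut_grp F S0)"
proof (rule group.subgroupI[OF group_Aut_grp[OF fusion subgroup_S0]])
  show "class_stabilizer P \<subseteq> carrier (Aut_grp F S0)"
    by (auto simp: class_stabilizer_def Aut_grp_def)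
  have "subgroup S0 (S\<lparr>carrier := S0\<rparr>)" using subgroup_S0 subgroup_S0_iff by simp
  then show "class_stabilizer P \<noteq> {}"
    using F0_Aut_S0_class_coset(1)[OF P] fusion_hom_inclusion[OF sub_fusion] by blast
  show "inv\<^bsub>Aut_grp F S0\<^esub> \<alpha> \<in> class_stabilizer P" if "\<alpha> \<in> class_stabilizer P" for \<alpha>
    using that class_stabilizer_inverse[OF P] Aut_grp_inv[OF fusion subgroup_S0]
    by (auto simp: class_stabilizer_def)
  show "\<alpha> \<otimes>\<^bsub>Aut_grp F S0\<^esub> \<beta> \<in> class_stabilizer P"
    if "\<alpha> \<in> class_stabilizer P" "\<beta> \<in> class_stabilizer P" for \<alpha> \<beta>
    using that class_coset_compose[OF P(2)] fusion_hom_compose[OF fusion]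
    by (simp add: class_stabilizer_def Aut_grp_def) blast
qed

lemma class_coset_hom:
  assumes P: "subgroup P S" "P \<subseteq> S0"
  shows "group_hom (Aut_grp F S0\<lparr>carrier := class_stabilizer P\<rparr>) (Aut_grp F P Mod F0 P P)
    (class_coset P)"
proof -
  interpret G: group "Aut_grp F P" using group_Aut_grp[OF fusion P(1)] .
  interpret H: normal "F0 P P" "Aut_grp F P" using normal_sub_Aut_grp[OF P] .
  have coset: "\<exists>\<theta> \<in> F0 (\<alpha> ` P) P. compose P \<theta> \<alpha> \<in> carrier (Aut_grp F P) \<and>
      class_coset P \<alpha> = F0 P P #>\<^bsub>Aut_grp F P\<^esub> compose P \<theta> \<alpha>"
    if "\<alpha> \<in> class_stabilizer P" for \<alpha>
    using that class_coset_eq_r_coset[OF P] by (auto simp: class_stabilizer_def Aut_grp_def)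
  have "class_coset P \<alpha> \<in> carrier (Aut_grp F P Mod F0 P P)" if "\<alpha> \<in> class_stabilizer P" for \<alpha>
    using coset[OF that] G.rcosetsI[OF H.subset] by (auto simp: FactGroup_def)
  moreover have "class_coset P (compose S0 \<alpha> \<beta>)
      = class_coset P \<alpha> \<otimes>\<^bsub>Aut_grp F P Mod F0 P P\<^esub> class_coset P \<beta>"
    if \<alpha>: "\<alpha> \<in> class_stabilizer P" and \<beta>: "\<beta> \<in> class_stabilizer P" for \<alpha> \<beta>
  proof -
    obtain \<theta> \<eta> where \<theta>: "\<theta> \<in> F0 (\<alpha> ` P) P" "compose P \<theta> \<alpha> \<in> carrier (Aut_grp F P)"
      "class_coset P \<alpha> = F0 P P #>\<^bsub>Aut_grp F P\<^esub> compose P \<theta> \<alpha>"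
      and \<eta>: "\<eta> \<in> F0 (\<beta> ` P) P" "compose P \<eta> \<beta> \<in> carrier (Aut_grp F P)"
      "class_coset P \<beta> = F0 P P #>\<^bsub>Aut_grp F P\<^esub> compose P \<eta> \<beta>"
      using coset[OF \<alpha>] coset[OF \<beta>] by blast
    have \<alpha>F: "\<alpha> \<in> F S0 S0" and \<beta>F: "\<beta> \<in> F S0 S0"
      using \<alpha> \<beta> by (auto simp: class_stabilizer_def)
    obtain \<zeta> where \<zeta>: "\<zeta> \<in> F0 (compose S0 \<alpha> \<beta> ` P) P"
      and eq: "compose P \<theta> \<alpha> \<otimes>\<^bsub>Aut_grp F P\<^esub> compose P \<eta> \<beta> = compose P \<zeta> (compose S0 \<alpha> \<beta>)"
      using class_coset_compose[OF P(2) \<alpha>F \<theta>(1) \<beta>F \<eta>(1)] by (auto simp: Aut_grp_def)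
    have "class_coset P (compose S0 \<alpha> \<beta>) = F0 P P #>\<^bsub>Aut_grp F P\<^esub> compose P \<zeta> (compose S0 \<alpha> \<beta>)"
      using class_coset_eq_r_coset(2)[OF P fusion_hom_compose[OF fusion \<beta>F \<alpha>F] \<zeta>] .
    also have "\<dots> = (F0 P P #>\<^bsub>Aut_grp F P\<^esub> compose P \<theta> \<alpha>) <#>\<^bsub>Aut_grp F P\<^esub>
        (F0 P P #>\<^bsub>Aut_grp F P\<^esub> compose P \<eta> \<beta>)"
      using H.rcos_sum[OF \<theta>(2) \<eta>(2)] eq by simp
    finally show ?thesis using \<theta>(3) \<eta>(3) by (simp add: FactGroup_def)
  qed
  ultimately show ?thesis
    using G.subgroup_imp_group group.subgroup_imp_group[OF group_Aut_grp[OF fusion subgroup_S0]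
        subgroup_class_stabilizer[OF P]] H.factorgroup_is_group
    by (auto simp: group_hom_def group_hom_axioms_def hom_def Aut_grp_def)
qed

lemma inverse_factors_through_Aut_S0:
  assumes P: "subgroup P S" "P \<subseteq> S0" and \<chi>: "\<chi> \<in> F P P"
  obtains \<beta> \<theta> where "\<beta> \<in> F S0 S0" "\<theta> \<in> F0 (\<beta> ` P) P"
    "(\<lambda>y\<in>P. inv_into P \<chi> y) = compose P \<theta> \<beta>"
proof -
  obtain \<phi>0 \<alpha> where \<phi>0: "\<phi>0 \<in> F0 P S0" and \<alpha>: "\<alpha> \<in> F S0 S0" and \<chi>_eq: "\<chi> = compose P \<alpha> \<phi>0"
    using Frattini[OF P fusion_hom_widen[OF fusion \<chi> subgroup_S0 P(2)]] by blast
  let ?\<beta> = "\<lambda>y\<in>S0. inv_into S0 \<alpha> y"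
  let ?\<theta> = "\<lambda>y\<in>\<phi>0 ` P. inv_into P \<phi>0 y"
  have \<phi>0_P: "\<phi>0 ` P \<subseteq> S0" using fusion_hom_Inj_hom(1)[OF sub_fusion \<phi>0] by auto
  have inj_\<alpha>: "inj_on \<alpha> S0" using fusion_hom_Inj_hom(2)[OF fusion \<alpha>] .
  have "\<alpha> ` \<phi>0 ` P = P"
    using fusion_hom_image_eq[OF fusion \<chi>] \<chi>_eq by (auto simp: compose_def image_iff)
  then have "?\<beta> ` P = inv_into S0 \<alpha> ` \<alpha> ` \<phi>0 ` P" using P(2) by (auto intro: image_cong)
  also have "\<dots> = \<phi>0 ` P" using inj_\<alpha> \<phi>0_P by simp
  finally have \<beta>_P: "?\<beta> ` P = \<phi>0 ` P" .
  show ?thesis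
  proof
    show "?\<beta> \<in> F S0 S0" using Aut_S0_inverse(1)[OF \<alpha>] .
    show "?\<theta> \<in> F0 (?\<beta> ` P) P" using fusion_hom_onto_image(2)[OF sub_fusion \<phi>0] \<beta>_P by simp
    show "(\<lambda>y\<in>P. inv_into P \<chi> y) = compose P ?\<theta> ?\<beta>"
    proof
      fix x
      show "(\<lambda>y\<in>P. inv_into P \<chi> y) x = compose P ?\<theta> ?\<beta> x"
      proof (cases "x \<in> P")
        case True
        then have x: "x \<in> S0" "?\<beta> x \<in> \<phi>0 ` P" using P(2) \<beta>_P by auto
        define y where "y = inv_into P \<phi>0 (?\<beta> x)"
        have "y \<in> P" "\<phi>0 y = ?\<beta> x"
          unfolding y_def using x(2) by (auto intro: inv_into_into f_inv_into_f)
        moreover have "\<alpha> (?\<beta> x) = x"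
          using x(1) Aut_S0_inverse(2)[OF \<alpha>] by (simp add: f_inv_into_f)
        ultimately have "\<chi> y = x" using \<chi>_eq by (simp add: compose_def)
        then have "inv_into P \<chi> x = y"
          using inv_into_f_f[OF fusion_hom_Inj_hom(2)[OF fusion \<chi>] \<open>y \<in> P\<close>] by simp
        then show ?thesis using True x(2) y_def by (simp add: compose_def)
      qed (simp add: compose_def)
    qed
  qed
qed

lemma class_coset_surjective:
  assumes P: "subgroup P S" "P \<subseteq> S0"
  shows "class_coset P ` class_stabilizer P = carrier (Aut_grp F P Mod F0 P P)"
proof -
  let ?Y = "Aut_grp F S0\<lparr>carrier := class_stabilizer P\<rparr>"
  interpret \<Phi>: group_hom ?Y "Aut_grp F P Mod F0 P P" "class_coset P"
    using class_coset_hom[OF P] .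
  interpret H: normal "F0 P P" "Aut_grp F P" using normal_sub_Aut_grp[OF P] .
  interpret q: group_hom "Aut_grp F P" "Aut_grp F P Mod F0 P P" "\<lambda>a. F0 P P #>\<^bsub>Aut_grp F P\<^esub> a"
    using H.r_coset_hom_Mod H.factorgroup_is_group by (simp add: group_hom_def group_hom_axioms_def)
  have "C \<in> class_coset P ` class_stabilizer P" if C: "C \<in> carrier (Aut_grp F P Mod F0 P P)" for C
  proof -
    obtain \<chi> where \<chi>: "\<chi> \<in> F P P" and C_eq: "C = F0 P P #>\<^bsub>Aut_grp F P\<^esub> \<chi>"
      using C by (auto simp: FactGroup_def RCOSETS_def Aut_grp_def)
    obtain \<beta> \<theta> where \<beta>: "\<beta> \<in> F S0 S0" and \<theta>: "\<theta> \<in> F0 (\<beta> ` P) P"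
      and inv_\<chi>: "(\<lambda>y\<in>P. inv_into P \<chi> y) = compose P \<theta> \<beta>"
      using inverse_factors_through_Aut_S0[OF P \<chi>] .
    have \<beta>Y: "\<beta> \<in> carrier ?Y" using \<beta> \<theta> by (auto simp: class_stabilizer_def)
    have \<chi>G: "\<chi> \<in> carrier (Aut_grp F P)" using \<chi> by (simp add: Aut_grp_def)
    have "class_coset P \<beta> = F0 P P #>\<^bsub>Aut_grp F P\<^esub> inv\<^bsub>Aut_grp F P\<^esub> \<chi>"
      using class_coset_eq_r_coset(2)[OF P \<beta> \<theta>] inv_\<chi> Aut_grp_inv[OF fusion P(1) \<chi>] by simp
    then have "class_coset P (inv\<^bsub>?Y\<^esub> \<beta>) = C"
      using \<Phi>.hom_inv[OF \<beta>Y] q.hom_inv[OF \<chi>G] C_eq q.hom_closed[OF \<chi>G]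
        group.inv_inv[OF H.factorgroup_is_group] by simp
    then show ?thesis using \<Phi>.G.inv_closed[OF \<beta>Y] by force
  qed
  then show ?thesis using \<Phi>.hom_closed by fastforce
qed

lemma card_Aut_grp_p_power_index:
  assumes P: "subgroup P S" "P \<subseteq> S0" and O_p: "O_p_upper p (Aut_grp F S0) \<subseteq> F0 S0 S0"
  shows "\<exists>n. card (F P P) = card (F0 P P) * p ^ n"
proof -
  interpret A: group "Aut_grp F S0" using group_Aut_grp[OF fusion subgroup_S0] .
  interpret H: normal "F0 P P" "Aut_grp F P" using normal_sub_Aut_grp[OF P] .
  have fin: "finite (carrier (Aut_grp F S0))" using finite_Aut_grp[OF fusion subgroup_S0] .
  have p: "Factorial_Ring.prime p" using fusion_system_group(3)[OF fusion] .
  obtain n where O_p_normal: "O_p_upper p (Aut_grp F S0) \<lhd> Aut_grp F S0"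
    and "card (carrier (Aut_grp F S0)) = card (O_p_upper p (Aut_grp F S0)) * p ^ n"
    using O_p_upper_normal_p_power_index[OF A.is_group fin p] by blast
  moreover have "O_p_upper p (Aut_grp F S0)
      \<subseteq> kernel (Aut_grp F S0\<lparr>carrier := class_stabilizer P\<rparr>) (Aut_grp F P Mod F0 P P) (class_coset P)"
    using O_p F0_Aut_S0_class_coset[OF P] by (auto simp: kernel_def FactGroup_def)
  ultimately obtain c where "card (class_coset P ` class_stabilizer P) = p ^ c"
    using A.card_hom_image_p_power[OF fin p subgroup_class_stabilizer[OF P] class_coset_hom[OF P]
        normal_imp_subgroup[OF O_p_normal]] by blast
  then have "card (rcosets\<^bsub>Aut_grp F P\<^esub> F0 P P) = p ^ c"
    using class_coset_surjective[OF P] by (simp add: FactGroup_def)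
  then have "card (F P P) = card (F0 P P) * p ^ c"
    using H.lagrange[OF H.subgroup_axioms] by (simp add: order_def Aut_grp_def mult.commute)
  then show ?thesis ..
qed

theorem O_p_upper_Aut_grp_subset:
  assumes "subgroup P S" "P \<subseteq> S0" "O_p_upper p (Aut_grp F S0) \<subseteq> F0 S0 S0"
  shows "O_p_upper p (Aut_grp F P) \<subseteq> F0 P P"
  using normal_sub_Aut_grp[OF assms(1,2)] card_Aut_grp_p_power_index[OF assms]
  unfolding O_p_upper_def by (auto simp: Aut_grp_def)

end

theorem lemma4p1:
  fixes p :: nat and S :: "('a, 'b) monoid_scheme"
    and F F0 :: "'a set \<Rightarrow> 'a set \<Rightarrow> ('a \<Rightarrow> 'a) set" and S0 :: "'a set"
  assumes "saturated_fusion_system p S F"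
    and "weakly_normal p S F S0 F0"
    and "O_p_upper p (Aut_grp F S0) \<subseteq> F0 S0 S0"
  shows "(\<forall>P. subgroup P S \<and> P \<subseteq> S0 \<longrightarrow> O_p_upper p (Aut_grp F P) \<subseteq> F0 P P) \<and>
         (hyp p S F \<subseteq> S0 \<longrightarrow> p_power_index p S F S0 F0)"
proof -
  have "fusion_system p S F" using assms(1) unfolding saturated_fusion_system_def by blast
  then interpret invariant_Frattini_subsystem p S F S0 F0
    using weakly_normal_invariant_Frattini_subsystem assms(2) by blast
  have "\<forall>P. subgroup P S \<and> P \<subseteq> S0 \<longrightarrow> O_p_upper p (Aut_grp F P) \<subseteq> F0 P P"
    using O_p_upper_Aut_grp_subset assms(3) by blast
  then show ?thesis unfolding p_power_index_def by blast
qed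

end
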